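(* Let $u\in\widehat{\mathfrak{kv}}_2$, and let $f=\sum_{m\ge2}f_mx^m\in x^2k[[x]]$ be the unique series with $\mathrm{div}(u)=\mathrm{Tr}(f(x)-f(x+y)+f(y))$. Then $f$ is odd, and for each odd $m=3,5,\dots$ the map $u\mapsto f_m$ is a character of $\widehat{\mathfrak{kv}}_2$ (a linear map vanishing on $[\widehat{\mathfrak{kv}}_2,\widehat{\mathfrak{kv}}_2]$).
   Context: $k$ is a field of characteristic zero; $\mathfrak{lie}_2$, $\mathrm{Ass}_2$ are the degree completions of the free Lie and free associative algebras over $k$ on $x,y$. Each $a\in\mathrm{Ass}_2$ decomposes uniquely as $a=a_0+(\partial_xa)x+(\partial_ya)y$. $\mathfrak{tr}_n=\mathrm{Ass}_n^+/\langle ab-ba\rangle$ with projection $\mathrm{Tr}$; for $f=\sum f_mx^m$ without constant term, $\mathrm{Tr}(f(x))=\sum f_m\mathrm{Tr}(x^m)$ and similarly with $x$ replaced by $y$ or $x+y$. $\mathfrak{sder}_2$ is the Lie algebra of derivations $u$ of $\mathfrak{lie}_2$ with $u(x)=[x,a]$, $u(y)=[y,b]$ for some $a,b\in\mathfrak{lie}_2$ and $u(x+y)=0$; write $u=(a,b)$ normalized so that $a$ has no term $\lambda x$ and $b$ no term $\lambda y$. $\mathrm{div}(u)=\mathrm{Tr}(x\,\partial_xa+y\,\partial_yb)$. The differential $\delta:\mathfrak{tr}_2\to\mathfrak{tr}_3$ is $(\delta g)(x,y,z)=g(y,z)-g(x+y,z)+g(x,y+z)-g(x,y)$. $\widehat{\mathfrak{kv}}_2=\{u\in\mathfrak{sder}_2:\delta(\mathrm{div}(u))=0\}$,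 a Lie subalgebra; for $u$ in it there is a unique $f\in x^2k[[x]]$ as in the claim. *)

theory Defs
  imports Main
begin

datatype gen2 = X | Y
datatype gen3 = X3 | Y3 | Z3

instance gen2 :: finite
proof
  have "(UNIV :: gen2 set) = {X, Y}" using gen2.exhaust by auto
  then show "finite (UNIV :: gen2 set)" by (metis finite.emptyI finite_insert)
qed

instance gen3 :: finite
proof
  have "(UNIV :: gen3 set) = {X3, Y3, Z3}" using gen3.exhaust by auto
  then show "finite (UNIV :: gen3 set)" by (metis finite.emptyI finite_insert)
qed

section \<open>Degree-completed free associative algebra: coefficient functions on words\<close>

type_synonym ('a, 'k) ser = "'a list \<Rightarrow> 'k"

definition szero :: "('a, 'k::zero) ser" where "szero = (\<lambda>w. 0)"
definition sone :: "('a, 'k::{zero,one}) ser" where "sone = (\<lambda>w. if w = [] then 1 else 0)"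
definition gen :: "'a \<Rightarrow> ('a, 'k::{zero,one}) ser" where
  "gen l = (\<lambda>w. if w = [l] then 1 else 0)"
definition sadd :: "('a, 'k::plus) ser \<Rightarrow> ('a, 'k) ser \<Rightarrow> ('a, 'k) ser" where
  "sadd a b = (\<lambda>w. a w + b w)"
definition ssub :: "('a, 'k::minus) ser \<Rightarrow> ('a, 'k) ser \<Rightarrow> ('a, 'k) ser" where
  "ssub a b = (\<lambda>w. a w - b w)"
definition ssc :: "'k::times \<Rightarrow> ('a, 'k) ser \<Rightarrow> ('a, 'k) ser" where
  "ssc c a = (\<lambda>w. c * a w)"
definition smult :: "('a, 'k::comm_ring_1) ser \<Rightarrow> ('a, 'k) ser \<Rightarrow> ('a, 'k) ser" where
  "smult a b = (\<lambda>w. \<Sum>i\<le>length w. a (take i w) * b (drop i w))"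
definition br :: "('a, 'k::comm_ring_1) ser \<Rightarrow> ('a, 'k) ser \<Rightarrow> ('a, 'k) ser" where
  "br a b = ssub (smult a b) (smult b a)"

fun spow :: "('a, 'k::comm_ring_1) ser \<Rightarrow> nat \<Rightarrow> ('a, 'k) ser" where
  "spow s 0 = sone"
| "spow s (Suc n) = smult s (spow s n)"

definition hom :: "nat \<Rightarrow> ('a, 'k::zero) ser \<Rightarrow> ('a, 'k) ser" where
  "hom n a = (\<lambda>w. if length w = n then a w else 0)"

definition fin_supp :: "('a, 'k::zero) ser \<Rightarrow> bool" where
  "fin_supp a \<longleftrightarrow> finite {w. a w \<noteq> 0}"

section \<open>Free Lie algebra (Lie polynomials) and its degree completion\<close>

inductive_set lie_poly :: "('a, 'k::comm_ring_1) ser set" where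
  lp_gen: "gen l \<in> lie_poly"
| lp_add: "a \<in> lie_poly \<Longrightarrow> b \<in> lie_poly \<Longrightarrow> sadd a b \<in> lie_poly"
| lp_sc: "a \<in> lie_poly \<Longrightarrow> ssc c a \<in> lie_poly"
| lp_br: "a \<in> lie_poly \<Longrightarrow> b \<in> lie_poly \<Longrightarrow> br a b \<in> lie_poly"

definition lie_ser :: "('a, 'k::comm_ring_1) ser set" where
  "lie_ser = {a. \<forall>n. hom n a \<in> lie_poly}"

section \<open>Cyclic words: tr_n = Ass_n^+ / span of commutators (degree-wise)\<close>

inductive_set comm_span :: "('a, 'k::comm_ring_1) ser set" where
  cs_zero: "szero \<in> comm_span"
| cs_comm: "fin_supp p \<Longrightarrow> fin_supp q \<Longrightarrow> br p q \<in> comm_span"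
| cs_add: "a \<in> comm_span \<Longrightarrow> b \<in> comm_span \<Longrightarrow> sadd a b \<in> comm_span"
| cs_sc: "a \<in> comm_span \<Longrightarrow> ssc c a \<in> comm_span"

text \<open>tr_eq a b means Tr a = Tr b\<close>
definition tr_eq :: "('a, 'k::comm_ring_1) ser \<Rightarrow> ('a, 'k) ser \<Rightarrow> bool" where
  "tr_eq a b \<longleftrightarrow> (\<forall>n. hom n (ssub a b) \<in> comm_span)"

section \<open>Substitutions (continuous algebra homomorphisms on generators)\<close>

primrec wordimg :: "('a \<Rightarrow> ('b, 'k::comm_ring_1) ser) \<Rightarrow> 'a list \<Rightarrow> ('b, 'k) ser" where
  "wordimg \<sigma> [] = sone"
| "wordimg \<sigma> (l # w) = smult (\<sigma> l) (wordimg \<sigma> w)"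

text \<open>valid for substitutions sending generators to linear combinations of generators\<close>
definition subst :: "('a::finite \<Rightarrow> ('b, 'k::comm_ring_1) ser) \<Rightarrow> ('a, 'k) ser \<Rightarrow> ('b, 'k) ser" where
  "subst \<sigma> c = (\<lambda>v. \<Sum>w\<in>{w. length w \<le> length v}. c w * wordimg \<sigma> w v)"

definition delta :: "(gen2, 'k::comm_ring_1) ser \<Rightarrow> (gen3, 'k) ser" where
  "delta g =
     sadd (ssub (subst (\<lambda>l. case l of X \<Rightarrow> gen Y3 | Y \<Rightarrow> gen Z3) g)
                (subst (\<lambda>l. case l of X \<Rightarrow> sadd (gen X3) (gen Y3) | Y \<Rightarrow> gen Z3) g))
          (ssub (subst (\<lambda>l. case l of X \<Rightarrow> gen X3 | Y \<Rightarrow> sadd (gen Y3) (gen Z3)) g)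
                (subst (\<lambda>l. case l of X \<Rightarrow> gen X3 | Y \<Rightarrow> gen Y3) g))"

section \<open>Power series in one element: f(s) = sum_m f_m s^m (s without constant term)\<close>

definition sereval :: "(nat \<Rightarrow> 'k::comm_ring_1) \<Rightarrow> ('a, 'k) ser \<Rightarrow> ('a, 'k) ser" where
  "sereval F s = (\<lambda>w. \<Sum>m\<le>length w. F m * spow s m w)"

definition tfser :: "(nat \<Rightarrow> 'k::comm_ring_1) \<Rightarrow> (gen2, 'k) ser" where
  "tfser F = sadd (ssub (sereval F (gen X)) (sereval F (sadd (gen X) (gen Y)))) (sereval F (gen Y))"

type_synonym 'k sd = "(gen2, 'k) ser \<times> (gen2, 'k) ser"

definition sder2 :: "'k::comm_ring_1 sd set" where
  "sder2 = {(a, b). a \<in> lie_ser \<and> b \<in> lie_ser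
              \<and> sadd (br (gen X) a) (br (gen Y) b) = szero
              \<and> a [X] = 0 \<and> b [Y] = 0}"

text \<open>partial derivative: a = a_0 + (pd X a) x + (pd Y a) y\<close>
definition pd :: "'a \<Rightarrow> ('a, 'k) ser \<Rightarrow> ('a, 'k) ser" where
  "pd l a = (\<lambda>w. a (w @ [l]))"

text \<open>representative of div(u) = Tr(x pd_x a + y pd_y b)\<close>
definition divg :: "'k::comm_ring_1 sd \<Rightarrow> (gen2, 'k) ser" where
  "divg u = sadd (smult (gen X) (pd X (fst u))) (smult (gen Y) (pd Y (snd u)))"

definition kv2 :: "'k::comm_ring_1 sd set" where
  "kv2 = {u \<in> sder2. tr_eq (delta (divg u)) szero}"

text \<open>values of the derivation on generators, and its continuous extension to the algebra\<close>
definition dvec :: "'k::comm_ring_1 sd \<Rightarrow> gen2 \<Rightarrow> (gen2, 'k) ser" where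
  "dvec u l = (case l of X \<Rightarrow> br (gen X) (fst u) | Y \<Rightarrow> br (gen Y) (snd u))"

definition der :: "('a::finite \<Rightarrow> ('a, 'k::comm_ring_1) ser) \<Rightarrow> ('a, 'k) ser \<Rightarrow> ('a, 'k) ser" where
  "der D c = (\<lambda>v. \<Sum>i\<le>length v. \<Sum>j\<in>{i..length v}. \<Sum>l\<in>UNIV.
                 c (take i v @ [l] @ drop j v) * D l (drop i (take j v)))"

definition is_bracket :: "'k::comm_ring_1 sd \<Rightarrow> 'k sd \<Rightarrow> 'k sd \<Rightarrow> bool" where
  "is_bracket w u v \<longleftrightarrow>
     (\<forall>l. dvec w l = ssub (der (dvec u) (dvec v l)) (der (dvec v) (dvec u l)))"

definition padd :: "'k::comm_ring_1 sd \<Rightarrow> 'k sd \<Rightarrow> 'k sd" where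
  "padd u v = (sadd (fst u) (fst v), sadd (snd u) (snd v))"
definition psc :: "'k::comm_ring_1 \<Rightarrow> 'k sd \<Rightarrow> 'k sd" where
  "psc c u = (ssc c (fst u), ssc c (snd u))"

end

theory Submission
  imports Defs
begin

text \<open>Summing the coefficients over the degree-\<open>m\<close> words that contain \<open>y\<close> exactly once is a
  linear form on \<open>tr\<^sub>2\<close>, since these words form a single cyclic class. On
  \<open>Tr(f(x) - f(x+y) + f(y))\<close> it gives \<open>-m f\<^sub>m\<close>; on \<open>div(u)\<close> it gives the coefficient
  \<open>b(x\<^sup>m\<^sup>-\<^sup>1 y)\<close>, because \<open>[x,a] + [y,b] = 0\<close> kills every other one-\<open>y\<close> coefficient
  of \<open>a\<close>. So \<open>f\<^sub>m = -b(x\<^sup>m\<^sup>-\<^sup>1 y)/m\<close>, which is linear in \<open>u\<close>. For even \<open>m\<close> it vanishes: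
  a Lie element of degree \<open>m\<close> changes sign under word reversal, while
  \<open>b(x\<^sup>m\<^sup>-\<^sup>1 y) = b(y x\<^sup>m\<^sup>-\<^sup>1)\<close>. For \<open>w = [u,v]\<close>, comparing coefficients of
  \<open>x\<^sup>m\<^sup>-\<^sup>1 y y\<close> in \<open>[y, b\<^sub>w]\<close> expresses \<open>b\<^sub>w(x\<^sup>m\<^sup>-\<^sup>1 y)\<close> as a difference of two
  terms that are symmetric in \<open>u\<close> and \<open>v\<close>, hence zero.\<close>

lemma smult_gen_left:
  "smult (gen l) s w = (if w \<noteq> [] \<and> hd w = l then s (tl w) else (0::'k::comm_ring_1))"
proof -
  have "gen l (take i w) * s (drop i w) = (if i = 1 then (if w \<noteq> [] \<and> hd w = l then s (tl w) else 0) else 0)"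
    if "i \<le> length w" for i using that by (cases w; cases i) (auto simp: gen_def)
  then have "smult (gen l) s w
      = (\<Sum>i\<le>length w. if i = 1 then (if w \<noteq> [] \<and> hd w = l then s (tl w) else 0) else 0)"
    unfolding smult_def by (intro sum.cong) auto
  then show ?thesis by (cases w) (auto simp: Suc_le_eq)
qed

lemma smult_gen_right:
  "smult s (gen l) w = (if w \<noteq> [] \<and> last w = l then s (butlast w) else (0::'k::comm_ring_1))"
proof -
  have "s (take i w) * gen l (drop i w)
      = (if i = length w - 1 then (if w \<noteq> [] \<and> last w = l then s (butlast w) else 0) else 0)"
    if "i \<le> length w" for i
  proof (cases "i = length w - 1 \<and> w \<noteq> []")
    case True
    then have "drop i w = drop (length (butlast w)) (butlast w @ [last w])" by simp
    with True show ?thesis by (simp add: gen_def butlast_conv_take)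
  next
    case False
    with that have "drop i w \<noteq> [l]" by (auto dest: arg_cong[where f=length])
    with False show ?thesis by (simp add: gen_def)
  qed
  then have "smult s (gen l) w
      = (\<Sum>i\<le>length w. if i = length w - 1 then (if w \<noteq> [] \<and> last w = l then s (butlast w) else 0) else 0)"
    unfolding smult_def by (intro sum.cong) auto
  then show ?thesis by (cases "w = []") auto
qed

lemma br_gen:
  "br (gen l) e w = (if w \<noteq> [] \<and> hd w = l then e (tl w) else (0::'k::comm_ring_1))
                  - (if w \<noteq> [] \<and> last w = l then e (butlast w) else 0)"
  by (simp add: br_def ssub_def smult_gen_left smult_gen_right)

lemma br_gen_replicate_X: "br (gen l) e (replicate k X) = (0::'k::comm_ring_1)"
proof (cases k)
  case (Suc k')
  have "replicate (Suc k') X = replicate k' X @ [X]" by (simp add: replicate_append_same)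
  then have "butlast (replicate (Suc k') X) = replicate k' X" by simp
  with Suc show ?thesis by (simp add: br_gen)
qed (simp add: br_gen)

lemma br_gen_X_at_X_Y:
  "br (gen X) e (replicate k X @ [Y]) = (if k = 0 then 0 else (e (replicate (k - 1) X @ [Y]) :: 'k::comm_ring_1))"
  by (cases k) (auto simp: br_gen)

lemma br_gen_Y_at_X_Y: "e [] = (0::'k::comm_ring_1) \<Longrightarrow> br (gen Y) e (replicate i X @ [Y]) = - e (replicate i X)"
  by (cases i) (auto simp: br_gen)

lemma br_gen_Y_at_X_XY: "br (gen Y) e (replicate i X @ [X, Y]) = - (e (replicate (Suc i) X) :: 'k::comm_ring_1)"
proof -
  have "hd (replicate i X @ [X, Y]) = X" by (cases i) auto
  moreover have "butlast (replicate i X @ [X, Y]) = replicate (Suc i) X"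
    by (simp add: butlast_append replicate_append_same)
  ultimately show ?thesis by (simp add: br_gen)
qed

lemma br_gen_Y_at_X_YY:
  "e [Y] = (0::'k::comm_ring_1) \<Longrightarrow> br (gen Y) e (replicate i X @ [Y, Y]) = - e (replicate i X @ [Y])"
  by (cases i) (auto simp: br_gen butlast_append)

section \<open>Symmetries of Lie elements\<close>

lemma sum_atMost_rev: "(\<Sum>i\<le>(n::nat). g i) = (\<Sum>i\<le>n. g (n - i))"
  using sum.atLeastAtMost_rev[of g 0 n] by (simp add: atLeast0AtMost)

lemma br_replicate: "br p q (replicate k l) = (0::'k::comm_ring_1)"
proof -
  have "smult p q (replicate k l) = (\<Sum>i\<le>k. p (replicate i l) * q (replicate (k - i) l))"
    unfolding smult_def by (rule sum.cong) auto
  also have "\<dots> = (\<Sum>i\<le>k. q (replicate i l) * p (replicate (k - i) l))"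
    by (subst sum_atMost_rev) (auto intro: sum.cong simp: mult.commute)
  also have "\<dots> = smult q p (replicate k l)"
    unfolding smult_def by (rule sum.cong) auto
  finally show ?thesis by (simp add: br_def ssub_def)
qed

lemma smult_rev:
  assumes p: "\<And>w. p (rev w) = (-1)^(length w + 1) * p w"
    and q: "\<And>w. q (rev w) = (-1)^(length w + 1) * q w"
  shows "smult p q (rev w) = (-1)^(length w) * smult q p (w::'a list)"
proof -
  let ?n = "length w"
  have sign: "(-1)^(?n - i + 1) * (-1)^(i + 1) = ((-1)^?n :: 'b)" if "i \<le> ?n" for i
  proof -
    have "?n - i + 1 + (i + 1) = ?n + 2" using that by simp
    then show ?thesis by (metis power_add power_minus1_even mult_1_right)
  qed
  have "smult p q (rev w) = (\<Sum>i\<le>?n. p (rev (drop (?n - i) w)) * q (rev (take (?n - i) w)))"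
    unfolding smult_def by (simp add: take_rev drop_rev)
  also have "\<dots> = (\<Sum>i\<le>?n. p (rev (drop i w)) * q (rev (take i w)))"
    by (subst sum_atMost_rev) (auto intro: sum.cong)
  also have "\<dots> = (\<Sum>i\<le>?n. (-1)^?n * (q (take i w) * p (drop i w)))"
    by (rule sum.cong) (auto simp: p q sign[symmetric] algebra_simps min_absorb2)
  also have "\<dots> = (-1)^?n * smult q p w"
    unfolding smult_def by (simp add: sum_distrib_left)
  finally show ?thesis .
qed

lemma lie_poly_Nil: "p \<in> lie_poly \<Longrightarrow> p [] = (0::'k::comm_ring_1)"
  by (induction rule: lie_poly.induct) (auto simp: gen_def sadd_def ssc_def br_def ssub_def smult_def)

lemma lie_poly_replicate: "p \<in> lie_poly \<Longrightarrow> 2 \<le> k \<Longrightarrow> p (replicate k l) = (0::'k::comm_ring_1)"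
  by (induction rule: lie_poly.induct)
     (auto simp: gen_def sadd_def ssc_def br_replicate dest: arg_cong[where f=length])

lemma lie_poly_rev: "p \<in> lie_poly \<Longrightarrow> p (rev w) = (-1)^(length w + 1) * (p w :: 'k::comm_ring_1)"
proof (induction arbitrary: w rule: lie_poly.induct)
  case (lp_gen l)
  then show ?case by (auto simp: gen_def)
next
  case (lp_br a b)
  then show ?case by (simp add: br_def ssub_def smult_rev algebra_simps)
qed (simp_all add: sadd_def ssc_def algebra_simps)

lemma lie_ser_hom_eq: "a \<in> lie_ser \<Longrightarrow> a w = hom (length w) a w \<and> hom (length w) a \<in> lie_poly"
  by (simp add: lie_ser_def hom_def)

lemma lie_ser_Nil: "a \<in> lie_ser \<Longrightarrow> a [] = (0::'k::comm_ring_1)"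
  using lie_ser_hom_eq[of a "[]"] lie_poly_Nil by fastforce

lemma lie_ser_replicate: "a \<in> lie_ser \<Longrightarrow> 2 \<le> k \<Longrightarrow> a (replicate k l) = (0::'k::comm_ring_1)"
  using lie_ser_hom_eq[of a "replicate k l"] lie_poly_replicate by fastforce

lemma lie_ser_rev: "a \<in> lie_ser \<Longrightarrow> a (rev w) = (-1)^(length w + 1) * (a w :: 'k::comm_ring_1)"
  using lie_ser_hom_eq[of a w] lie_ser_hom_eq[of a "rev w"] lie_poly_rev[of "hom (length w) a" w] by simp

lemma lie_ser_sadd: "a \<in> lie_ser \<Longrightarrow> b \<in> lie_ser \<Longrightarrow> sadd a b \<in> (lie_ser :: ('a,'k::comm_ring_1) ser set)"
proof -
  have "hom n (sadd a b) = sadd (hom n a) (hom n b)" for n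
    by (auto simp: hom_def sadd_def)
  then show "a \<in> lie_ser \<Longrightarrow> b \<in> lie_ser \<Longrightarrow> ?thesis" by (simp add: lie_ser_def lie_poly.lp_add)
qed

lemma lie_ser_ssc: "a \<in> lie_ser \<Longrightarrow> ssc c a \<in> (lie_ser :: ('a,'k::comm_ring_1) ser set)"
proof -
  have "hom n (ssc c a) = ssc c (hom n a)" for n
    by (auto simp: hom_def ssc_def)
  then show "a \<in> lie_ser \<Longrightarrow> ?thesis" by (simp add: lie_ser_def lie_poly.lp_sc)
qed

lemma sder2_D:
  "u \<in> sder2 \<Longrightarrow> fst u \<in> lie_ser \<and> snd u \<in> lie_ser \<and> fst u [X] = 0 \<and> snd u [Y] = (0::'k::comm_ring_1)"
  unfolding sder2_def by auto

lemma sder2_br_gen_sum: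
  "u \<in> sder2 \<Longrightarrow> br (gen X) (fst u) w + br (gen Y) (snd u) w = (0::'k::comm_ring_1)"
  unfolding sder2_def by (auto simp: sadd_def szero_def fun_eq_iff)

lemma sder2_I:
  "a \<in> lie_ser \<Longrightarrow> b \<in> lie_ser \<Longrightarrow> a [X] = 0 \<Longrightarrow> b [Y] = 0 \<Longrightarrow>
     (\<And>w. br (gen X) a w + br (gen Y) b w = (0::'k::comm_ring_1)) \<Longrightarrow> (a, b) \<in> sder2"
  unfolding sder2_def by (auto simp: sadd_def szero_def fun_eq_iff)

lemma sder2_padd: "u \<in> sder2 \<Longrightarrow> v \<in> sder2 \<Longrightarrow> padd u v \<in> (sder2 :: 'k::comm_ring_1 sd set)"
proof -
  assume u: "u \<in> sder2" and v: "v \<in> sder2"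
  note U = sder2_D[OF u] and V = sder2_D[OF v]
  show ?thesis unfolding padd_def
  proof (rule sder2_I)
    show "sadd (fst u) (fst v) \<in> lie_ser" "sadd (snd u) (snd v) \<in> lie_ser"
      using U V by (simp_all add: lie_ser_sadd)
    show "sadd (fst u) (fst v) [X] = 0" "sadd (snd u) (snd v) [Y] = 0" using U V by (simp_all add: sadd_def)
    fix w
    have "br (gen X) (sadd (fst u) (fst v)) w + br (gen Y) (sadd (snd u) (snd v)) w
        = (br (gen X) (fst u) w + br (gen Y) (snd u) w) + (br (gen X) (fst v) w + br (gen Y) (snd v) w)"
      by (simp add: br_gen sadd_def algebra_simps)
    with sder2_br_gen_sum[OF u] sder2_br_gen_sum[OF v]
    show "br (gen X) (sadd (fst u) (fst v)) w + br (gen Y) (sadd (snd u) (snd v)) w = 0"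
      by simp
  qed
qed

lemma sder2_psc: "u \<in> sder2 \<Longrightarrow> psc c u \<in> (sder2 :: 'k::comm_ring_1 sd set)"
proof -
  assume u: "u \<in> sder2"
  note U = sder2_D[OF u]
  show ?thesis unfolding psc_def
  proof (rule sder2_I)
    show "ssc c (fst u) \<in> lie_ser" "ssc c (snd u) \<in> lie_ser" using U by (simp_all add: lie_ser_ssc)
    show "ssc c (fst u) [X] = 0" "ssc c (snd u) [Y] = 0" using U by (simp_all add: ssc_def)
    fix w
    have "br (gen X) (ssc c (fst u)) w + br (gen Y) (ssc c (snd u)) w
        = c * (br (gen X) (fst u) w + br (gen Y) (snd u) w)"
      by (simp add: br_gen ssc_def algebra_simps)
    with sder2_br_gen_sum[OF u] show "br (gen X) (ssc c (fst u)) w + br (gen Y) (ssc c (snd u)) w = 0"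
      by simp
  qed
qed

text \<open>The identity \<open>[x,a] + [y,b] = 0\<close> read off at words with at most one \<open>y\<close> forces
  \<open>a\<close> to have no such terms except \<open>a(x\<^sup>k y)\<close>, which equals \<open>b(x\<^sup>k\<^sup>+\<^sup>1)\<close>.\<close>

lemma sder2_fst_X_Y:
  assumes "(u::'k::comm_ring_1 sd) \<in> sder2"
  shows "fst u (replicate k X @ [Y]) = snd u (replicate (Suc k) X)"
  using sder2_br_gen_sum[OF assms, of "replicate (Suc k) X @ [Y]"] by (simp add: br_gen butlast_append)

lemma sder2_fst_shift_Y:
  assumes "(u::'k::comm_ring_1 sd) \<in> sder2"
  shows "fst u (replicate p X @ Y # replicate (Suc q) X) = fst u (replicate (Suc p) X @ Y # replicate q X)"
proof -
  let ?w = "replicate (Suc p) X @ Y # replicate q X"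
  have "X # replicate p X @ Y # replicate (Suc q) X = ?w @ [X]"
    by (simp add: replicate_append_same)
  with sder2_br_gen_sum[OF assms, of "?w @ [X]"] show ?thesis
    by (simp only: br_gen butlast_snoc last_snoc) simp
qed

lemma sder2_snd_replicate_X:
  assumes "(u::'k::comm_ring_1 sd) \<in> sder2"
  shows "snd u (replicate t X) = (if t = 1 then snd u [X] else 0)"
proof -
  have "snd u \<in> lie_ser" using sder2_D[OF assms] by blast
  moreover have "t = 0 \<or> t = 1 \<or> 2 \<le> t" by arith
  ultimately show ?thesis using lie_ser_Nil lie_ser_replicate by fastforce
qed

lemma sder2_fst_one_Y:
  assumes u: "(u::'k::comm_ring_1 sd) \<in> sder2" and jk: "1 \<le> j + k"
  shows "fst u (replicate j X @ Y # replicate k X) = 0"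
proof -
  have "fst u (replicate j X @ Y # replicate k X) = fst u (replicate (j + k) X @ [Y])"
  proof (induction k arbitrary: j)
    case (Suc k)
    then show ?case using sder2_fst_shift_Y[OF u, of j k] Suc.IH[of "Suc j"] by simp
  qed simp
  also have "\<dots> = 0"
    using jk sder2_fst_X_Y[OF u, of "j + k"] sder2_snd_replicate_X[OF u, of "Suc (j + k)"] by auto
  finally show ?thesis .
qed

text \<open>For odd \<open>p\<close>, reversal antisymmetry of the Lie element \<open>b\<close> gives \<open>b(y x\<^sup>p) = -b(x\<^sup>p y)\<close>,
  while \<open>[x,a] + [y,b] = 0\<close> at the word \<open>y x\<^sup>p y\<close> gives \<open>b(y x\<^sup>p) = b(x\<^sup>p y)\<close>.\<close>

lemma sder2_snd_odd:
  assumes u: "(u::'k::field_char_0 sd) \<in> sder2" and p: "odd p"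
  shows "snd u (replicate p X @ [Y]) = 0"
proof -
  obtain k where k: "p = Suc k" using p by (cases p) auto
  have "snd u (Y # replicate p X) = - snd u (replicate p X @ [Y])"
    using lie_ser_rev[of "snd u" "replicate p X @ [Y]"] sder2_D[OF u] p by simp
  moreover have "snd u (replicate p X @ [Y]) = snd u (Y # replicate p X)"
    using sder2_br_gen_sum[OF u, of "Y # replicate p X @ [Y]"] k by (simp add: br_gen butlast_append)
  ultimately show ?thesis by simp
qed

section \<open>The coefficient of \<open>Tr(x\<^sup>m\<^sup>-\<^sup>1 y)\<close>\<close>

definition one_Y_words :: "nat \<Rightarrow> gen2 list set" where
  "one_Y_words m = {w. length w = m \<and> length (filter (\<lambda>c. c = Y) w) = 1}"

text \<open>Words with one \<open>y\<close> form a single cyclic class in each degree, so summing coefficients over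
  them is a linear form on \<open>tr\<^sub>2\<close>; it reads off the coefficient of \<open>Tr(x\<^sup>m\<^sup>-\<^sup>1 y)\<close>.\<close>

definition one_Y_sum :: "nat \<Rightarrow> (gen2, 'k::comm_ring_1) ser \<Rightarrow> 'k" where
  "one_Y_sum m a = (\<Sum>w\<in>one_Y_words m. a w)"

definition one_Y_word :: "nat \<Rightarrow> nat \<Rightarrow> gen2 list" where
  "one_Y_word m j = replicate j X @ Y # replicate (m - 1 - j) X"

lemma finite_one_Y_words: "finite (one_Y_words m)"
proof (rule finite_subset)
  show "one_Y_words m \<subseteq> {w. set w \<subseteq> UNIV \<and> length w = m}" by (auto simp: one_Y_words_def)
qed (rule finite_lists_length_eq, simp)

lemma one_Y_words_rotate: "s @ t \<in> one_Y_words m \<Longrightarrow> t @ s \<in> one_Y_words m"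
  by (auto simp: one_Y_words_def)

lemma eq_replicate_X_iff: "w = replicate (length w) X \<longleftrightarrow> Y \<notin> set w"
  by (metis gen2.exhaust in_set_replicate gen2.distinct(1) replicate_length_same)

lemma one_Y_words_eq_image: "one_Y_words m = one_Y_word m ` {..<m}"
proof
  show "one_Y_word m ` {..<m} \<subseteq> one_Y_words m"
    by (auto simp: one_Y_word_def one_Y_words_def filter_empty_conv)
  show "one_Y_words m \<subseteq> one_Y_word m ` {..<m}"
  proof
    fix w assume w: "w \<in> one_Y_words m"
    then have "filter (\<lambda>c. c = Y) w \<noteq> []" by (auto simp: one_Y_words_def)
    then have "Y \<in> set w" by (auto simp: filter_empty_conv)
    then obtain r s where w_eq: "w = r @ Y # s" and "Y \<notin> set r" by (blast dest: split_list_first)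
    moreover from w w_eq \<open>Y \<notin> set r\<close> have "filter (\<lambda>c. c = Y) s = []"
      by (simp add: one_Y_words_def filter_empty_conv)
    then have "Y \<notin> set s" by (auto simp: filter_empty_conv)
    ultimately have "w = one_Y_word m (length r)" and "length r < m"
      using w eq_replicate_X_iff by (auto simp: one_Y_word_def one_Y_words_def)
    then show "w \<in> one_Y_word m ` {..<m}" by blast
  qed
qed

lemma inj_on_one_Y_word: "inj_on (one_Y_word m) {..<m}"
proof
  fix i j assume "one_Y_word m i = one_Y_word m j"
  then have "takeWhile (\<lambda>c. c = X) (one_Y_word m i) = takeWhile (\<lambda>c. c = X) (one_Y_word m j)" by simp
  moreover have "takeWhile (\<lambda>c. c = X) (replicate k X @ Y # r) = replicate k X" for k r
    by (induction k) simp_all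
  ultimately show "i = j" by (simp add: one_Y_word_def)
qed

lemma one_Y_sum_eq: "one_Y_sum m a = (\<Sum>j<m. a (one_Y_word m j))"
  by (simp add: one_Y_sum_def one_Y_words_eq_image sum.reindex[OF inj_on_one_Y_word])

lemma one_Y_sum_sadd: "one_Y_sum m (sadd a b) = one_Y_sum m a + one_Y_sum m b"
  by (simp add: one_Y_sum_def sadd_def sum.distrib)

lemma one_Y_sum_ssub: "one_Y_sum m (ssub a b) = one_Y_sum m a - one_Y_sum m b"
  by (simp add: one_Y_sum_def ssub_def sum_subtractf)

lemma one_Y_sum_ssc: "one_Y_sum m (ssc c a) = c * one_Y_sum m a"
  by (simp add: one_Y_sum_def ssc_def sum_distrib_left)

lemma one_Y_sum_hom: "one_Y_sum m (hom m a) = one_Y_sum m a"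
  by (auto simp: one_Y_sum_def hom_def one_Y_words_def intro!: sum.cong)

lemma sum_one_Y_words_splits:
  "(\<Sum>w\<in>one_Y_words m. \<Sum>i\<le>length w. g (take i w) (drop i w))
     = (\<Sum>(s, t)\<in>{(s, t). s @ t \<in> one_Y_words m}. g s t)"
proof -
  have "(\<Sum>w\<in>one_Y_words m. \<Sum>i\<le>length w. g (take i w) (drop i w))
      = (\<Sum>(w, i)\<in>Sigma (one_Y_words m) (\<lambda>w. {..length w}). g (take i w) (drop i w))"
    by (subst sum.Sigma) (simp_all add: finite_one_Y_words split_def)
  also have "\<dots> = (\<Sum>(s, t)\<in>{(s, t). s @ t \<in> one_Y_words m}. g s t)"
    by (rule sum.reindex_bij_witness[where i="\<lambda>(s, t). (s @ t, length s)" and j="\<lambda>(w, i). (take i w, drop i w)"])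
       (auto simp: min_absorb2)
  finally show ?thesis .
qed

lemma one_Y_sum_br: "one_Y_sum m (br p q) = (0::'k::comm_ring_1)"
proof -
  let ?T = "{(s, t). s @ t \<in> one_Y_words m}"
  have "one_Y_sum m (br p q) = (\<Sum>(s, t)\<in>?T. p s * q t) - (\<Sum>(s, t)\<in>?T. q s * p t)"
    unfolding one_Y_sum_def br_def ssub_def smult_def sum_subtractf
    by (simp only: sum_one_Y_words_splits[where g="\<lambda>s t. p s * q t"] sum_one_Y_words_splits[where g="\<lambda>s t. q s * p t"])
  also have "(\<Sum>(s, t)\<in>?T. q s * p t) = (\<Sum>(s, t)\<in>?T. p s * q t)"
    by (rule sum.reindex_bij_witness[where i="\<lambda>(s, t). (t, s)" and j="\<lambda>(s, t). (t, s)"])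
       (auto simp: one_Y_words_rotate mult.commute)
  finally show ?thesis by simp
qed

lemma one_Y_sum_comm_span: "c \<in> comm_span \<Longrightarrow> one_Y_sum m c = 0"
proof (induction rule: comm_span.induct)
  case cs_zero
  then show ?case by (simp add: one_Y_sum_def szero_def)
qed (simp_all add: one_Y_sum_br one_Y_sum_sadd one_Y_sum_ssc)

lemma one_Y_sum_tr_eq: "tr_eq a b \<Longrightarrow> one_Y_sum m a = one_Y_sum m b"
  unfolding tr_eq_def
  by (metis one_Y_sum_comm_span one_Y_sum_hom one_Y_sum_ssub right_minus_eq)

lemma spow_gen: "spow (gen l) k w = (if w = replicate k l then 1 else (0::'k::comm_ring_1))"
proof (induction k arbitrary: w)
  case (Suc k)
  then show ?case by (cases w) (auto simp: smult_gen_left)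
qed (simp add: sone_def)

lemma spow_gen_X_plus_gen_Y:
  "spow (sadd (gen X) (gen Y)) k w = (if length w = k then 1 else (0::'k::comm_ring_1))"
proof (induction k arbitrary: w)
  case (Suc k)
  have split: "smult (sadd (gen X) (gen Y)) s v = smult (gen X) s v + smult (gen Y) s v" for s v
    by (simp add: smult_def sadd_def sum.distrib distrib_right)
  show ?case
  proof (cases w)
    case (Cons c w')
    then show ?thesis by (cases c) (simp_all add: split smult_gen_left Suc.IH)
  qed (simp add: split smult_gen_left)
qed (simp add: sone_def)

lemma one_Y_sum_tfser: "2 \<le> m \<Longrightarrow> one_Y_sum m (tfser G) = - (of_nat m * (G m :: 'k::comm_ring_1))"
proof -
  assume m: "2 \<le> m"
  have "tfser G (one_Y_word m j) = - G m" if "j < m" for j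
  proof -
    have "X \<in> set (one_Y_word m j)" "Y \<in> set (one_Y_word m j)"
      using m by (cases j; simp add: one_Y_word_def)+
    then have "one_Y_word m j \<noteq> replicate k l" for k l
      by (cases l) (auto dest: in_set_replicate[THEN iffD1])
    moreover have "length (one_Y_word m j) = m" using that by (simp add: one_Y_word_def)
    ultimately have "sereval G (gen l) (one_Y_word m j) = 0"
        and "sereval G (sadd (gen X) (gen Y)) (one_Y_word m j) = G m" for l
      by (simp_all add: sereval_def spow_gen spow_gen_X_plus_gen_Y if_distrib cong: if_cong)
    moreover have "tfser G w = sereval G (gen X) w - sereval G (sadd (gen X) (gen Y)) w + sereval G (gen Y) w"
      for w by (simp add: tfser_def sadd_def ssub_def)
    ultimately show ?thesis by simp
  qed
  then show ?thesis by (simp add: one_Y_sum_eq)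
qed

lemma one_Y_sum_divg:
  assumes u: "(u::'k::comm_ring_1 sd) \<in> sder2" and m: "2 \<le> m"
  shows "one_Y_sum m (divg u) = snd u (replicate (m - 1) X @ [Y])"
proof -
  have divg_eq: "divg u w = (if w \<noteq> [] \<and> hd w = X then fst u (tl w @ [X]) else 0)
      + (if w \<noteq> [] \<and> hd w = Y then snd u (tl w @ [Y]) else 0)" for w
    by (simp add: divg_def sadd_def smult_gen_left pd_def)
  have "divg u (one_Y_word m (Suc j)) = 0" if "Suc j < m" for j
  proof -
    have "replicate (m - Suc (Suc j)) X @ [X] = replicate (m - Suc j) X"
      by (simp add: replicate_append_same Suc_diff_Suc[OF that, symmetric])
    then have "divg u (one_Y_word m (Suc j)) = fst u (replicate j X @ Y # replicate (m - 1 - j) X)"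
      by (simp add: divg_eq one_Y_word_def)
    also have "\<dots> = 0" using that m by (intro sder2_fst_one_Y[OF u]) simp
    finally show ?thesis .
  qed
  moreover obtain n where "m = Suc n" using m by (cases m) auto
  ultimately have "one_Y_sum m (divg u) = divg u (one_Y_word m 0)"
    by (simp add: one_Y_sum_eq sum.lessThan_Suc_shift del: sum.lessThan_Suc)
  then show ?thesis by (simp add: divg_eq one_Y_word_def)
qed

lemma tr_eq_divg_tfser_coeff:
  assumes "(u::'k::comm_ring_1 sd) \<in> sder2" and "tr_eq (divg u) (tfser G)" and "2 \<le> m"
  shows "of_nat m * G m = - snd u (replicate (m - 1) X @ [Y])"
  using one_Y_sum_tr_eq[OF assms(2), of m] one_Y_sum_divg[OF assms(1,3)] one_Y_sum_tfser[OF assms(3), of G]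
  by simp

lemma divg_padd: "divg (padd u v) = sadd (divg u) (divg (v::'k::comm_ring_1 sd))"
  by (simp add: fun_eq_iff divg_def padd_def sadd_def smult_gen_left pd_def)

lemma divg_psc: "divg (psc c u) = ssc c (divg (u::'k::comm_ring_1 sd))"
  by (simp add: fun_eq_iff divg_def psc_def sadd_def ssc_def smult_gen_left pd_def algebra_simps)

lemma subst_sadd: "subst \<sigma> (sadd c d) = sadd (subst \<sigma> c) (subst \<sigma> d)"
  by (simp add: fun_eq_iff subst_def sadd_def distrib_right sum.distrib)

lemma subst_ssc: "subst \<sigma> (ssc k c) = ssc k (subst \<sigma> c)"
  by (simp add: fun_eq_iff subst_def ssc_def sum_distrib_left mult.assoc)

lemma delta_sadd: "delta (sadd g h) = sadd (delta g) (delta (h::(gen2,'k::comm_ring_1) ser))"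
  unfolding delta_def subst_sadd by (simp add: fun_eq_iff sadd_def ssub_def algebra_simps)

lemma delta_ssc: "delta (ssc c g) = ssc c (delta (g::(gen2,'k::comm_ring_1) ser))"
  unfolding delta_def subst_ssc by (simp add: fun_eq_iff sadd_def ssub_def ssc_def algebra_simps)

lemma hom_ssub_szero: "hom n (ssub a szero) = hom n (a::('a,'k::comm_ring_1) ser)"
  by (simp add: fun_eq_iff hom_def ssub_def szero_def)

lemma tr_eq_szero_sadd:
  "tr_eq a szero \<Longrightarrow> tr_eq b szero \<Longrightarrow> tr_eq (sadd a b) (szero::('a,'k::comm_ring_1) ser)"
proof -
  have "hom n (sadd a b) = sadd (hom n a) (hom n b)" for n by (auto simp: hom_def sadd_def)
  then show "tr_eq a szero \<Longrightarrow> tr_eq b szero \<Longrightarrow> ?thesis"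
    by (simp add: tr_eq_def hom_ssub_szero comm_span.cs_add)
qed

lemma tr_eq_szero_ssc: "tr_eq a szero \<Longrightarrow> tr_eq (ssc c a) (szero::('a,'k::comm_ring_1) ser)"
proof -
  have "hom n (ssc c a) = ssc c (hom n a)" for n by (auto simp: hom_def ssc_def)
  then show "tr_eq a szero \<Longrightarrow> ?thesis"
    by (simp add: tr_eq_def hom_ssub_szero comm_span.cs_sc)
qed

lemma kv2_padd: "u \<in> kv2 \<Longrightarrow> v \<in> kv2 \<Longrightarrow> padd u v \<in> (kv2 :: 'k::comm_ring_1 sd set)"
  by (simp add: kv2_def sder2_padd divg_padd delta_sadd tr_eq_szero_sadd)

lemma kv2_psc: "u \<in> kv2 \<Longrightarrow> psc c u \<in> (kv2 :: 'k::comm_ring_1 sd set)"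
  by (simp add: kv2_def sder2_psc divg_psc delta_ssc tr_eq_szero_ssc)

text \<open>If \<open>D\<close> kills all words without \<open>y\<close> and the word \<open>y\<close>, only the subwords ending in the
  first or the second \<open>y\<close> of \<open>x\<^sup>p y y\<close> contribute to the derivation.\<close>

lemma der_replicate_X_YY:
  fixes D :: "gen2 \<Rightarrow> (gen2, 'k::comm_ring_1) ser"
  assumes DX: "\<And>l k. D l (replicate k X) = 0" and DY: "\<And>l. D l [Y] = 0"
  shows "der D c (replicate p X @ [Y, Y]) = (\<Sum>i\<le>p. \<Sum>l\<in>UNIV.
             c (replicate i X @ [l, Y]) * D l (replicate (p - i) X @ [Y])
           + c (replicate i X @ [l]) * D l (replicate (p - i) X @ [Y, Y]))"
proof -
  define W where "W = replicate p X @ [Y, Y]"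
  define T where "T i j = (\<Sum>l\<in>UNIV. c (take i W @ [l] @ drop j W) * D l (drop i (take j W)))" for i j
  have T_zero: "T i j = 0" if "i \<le> j" "j \<le> Suc (Suc p)" "\<not> (i \<le> p \<and> p < j)" for i j
  proof -
    have "drop i (take j W) = replicate (j - i) X \<or> drop i (take j W) = [Y]"
      using that by (cases "j \<le> p") (auto simp: W_def le_Suc_eq)
    then show ?thesis by (auto simp: T_def DX DY)
  qed
  have "der D c W = (\<Sum>i\<le>Suc (Suc p). \<Sum>j\<in>{i..Suc (Suc p)}. T i j)"
    unfolding der_def T_def by (simp add: W_def)
  also have "\<dots> = (\<Sum>i\<le>Suc (Suc p). if i \<le> p then T i (Suc p) + T i (Suc (Suc p)) else 0)"
  proof (rule sum.cong[OF refl])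
    fix i assume "i \<in> {..Suc (Suc p)}"
    moreover have "(\<Sum>j\<in>{i..p}. T i j) = 0" by (rule sum.neutral) (auto intro: T_zero)
    ultimately show "(\<Sum>j\<in>{i..Suc (Suc p)}. T i j) = (if i \<le> p then T i (Suc p) + T i (Suc (Suc p)) else 0)"
      by (auto simp: T_zero le_Suc_eq)
  qed
  also have "\<dots> = (\<Sum>i\<le>p. T i (Suc p) + T i (Suc (Suc p)))"
    by simp
  finally show ?thesis
    by (simp add: W_def T_def sum.distrib)
qed

lemma UNIV_gen2: "(UNIV :: gen2 set) = {X, Y}"
  using gen2.exhaust by auto

lemma der_dvec_Y_at_X_YY:
  fixes u v :: "'k::comm_ring_1 sd"
  assumes u: "u \<in> sder2" and v: "v \<in> sder2" and p: "2 \<le> p"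
  shows "der (dvec u) (dvec v Y) (replicate p X @ [Y, Y])
       = snd v (replicate (p - 1) X @ [Y]) * snd u [X] + snd v [X] * snd u (replicate (p - 1) X @ [Y])"
proof -
  note U = sder2_D[OF u] and V = sder2_D[OF v]
  have DX: "dvec u l (replicate k X) = 0" and DY: "dvec u l [Y] = 0" for l k
    by (cases l; simp add: dvec_def br_gen_replicate_X; simp add: br_gen)+
  have "der (dvec u) (dvec v Y) (replicate p X @ [Y, Y])
      = (\<Sum>i\<le>p. (if i = p - 1 then snd v (replicate i X @ [Y]) * snd u [X] else 0)
              + (if i = 1 then snd v [X] * snd u (replicate (p - i) X @ [Y]) else 0))"
    unfolding der_replicate_X_YY[OF DX DY]
  proof (rule sum.cong[OF refl])
    fix i assume "i \<in> {..p}"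
    then have i: "i \<le> p" by simp
    have XY: "dvec v Y (replicate i X @ [X, Y]) * dvec u X (replicate (p - i) X @ [Y]) = 0"
    proof (cases "i = 0")
      case True
      have "fst u (replicate (p - 1) X @ Y # replicate 0 X) = 0"
        using p by (intro sder2_fst_one_Y[OF u]) simp
      with True show ?thesis by (simp add: dvec_def br_gen_X_at_X_Y)
    next
      case False
      then show ?thesis
        by (simp add: dvec_def br_gen_Y_at_X_XY sder2_snd_replicate_X[OF v] del: replicate.simps)
    qed
    have "dvec v Y (replicate i X @ [X]) = 0"
      using br_gen_replicate_X[of Y "snd v" "Suc i"] by (simp add: dvec_def replicate_append_same)
    moreover have "p - i = 1 \<longleftrightarrow> i = p - 1" using i p by auto
    ultimately show "(\<Sum>l\<in>UNIV. dvec v Y (replicate i X @ [l, Y]) * dvec u l (replicate (p - i) X @ [Y])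
          + dvec v Y (replicate i X @ [l]) * dvec u l (replicate (p - i) X @ [Y, Y]))
        = (if i = p - 1 then snd v (replicate i X @ [Y]) * snd u [X] else 0)
          + (if i = 1 then snd v [X] * snd u (replicate (p - i) X @ [Y]) else 0)"
      using XY U V
      by (simp add: UNIV_gen2 dvec_def br_gen_Y_at_X_YY br_gen_Y_at_X_Y lie_ser_Nil
                    sder2_snd_replicate_X[OF u] sder2_snd_replicate_X[OF v])
  qed
  also have "\<dots> = snd v (replicate (p - 1) X @ [Y]) * snd u [X] + snd v [X] * snd u (replicate (p - 1) X @ [Y])"
    using p by (simp add: sum.distrib)
  finally show ?thesis .
qed

lemma sder2_bracket_snd_X_Y:
  fixes u v w :: "'k::comm_ring_1 sd"
  assumes "u \<in> sder2" and "v \<in> sder2" and "w \<in> sder2" and "is_bracket w u v" and "2 \<le> p"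
  shows "snd w (replicate p X @ [Y]) = 0"
proof -
  let ?W = "replicate p X @ [Y, Y]"
  have "- snd w (replicate p X @ [Y]) = dvec w Y ?W"
    using br_gen_Y_at_X_YY[of "snd w" p] sder2_D[OF assms(3)] by (simp add: dvec_def)
  also have "\<dots> = der (dvec u) (dvec v Y) ?W - der (dvec v) (dvec u Y) ?W"
    using assms(4) by (simp add: is_bracket_def ssub_def)
  also have "\<dots> = 0"
    using der_dvec_Y_at_X_YY[OF assms(1,2,5)] der_dvec_Y_at_X_YY[OF assms(2,1,5)] by (simp add: algebra_simps)
  finally show ?thesis by simp
qed

theorem proposition4p4:
  fixes F :: "'k::field_char_0 sd \<Rightarrow> nat \<Rightarrow> 'k"
  assumes f_def: "\<forall>u\<in>kv2. F u 0 = 0 \<and> F u 1 = 0 \<and> tr_eq (divg u) (tfser (F u))"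
  shows "(\<forall>u\<in>kv2. \<forall>m. even m \<longrightarrow> F u m = 0)
       \<and> (\<forall>m. odd m \<and> 3 \<le> m \<longrightarrow>
            (\<forall>u\<in>kv2. \<forall>v\<in>kv2. F (padd u v) m = F u m + F v m)
          \<and> (\<forall>u\<in>kv2. \<forall>c. F (psc c u) m = c * F u m)
          \<and> (\<forall>u\<in>kv2. \<forall>v\<in>kv2. \<forall>w\<in>kv2. is_bracket w u v \<longrightarrow> F w m = 0))"
proof -
  have sder2: "u \<in> sder2" if "u \<in> kv2" for u :: "'k sd" using that by (simp add: kv2_def)
  have F: "F u m = - snd u (replicate (m - 1) X @ [Y]) / of_nat m" if "u \<in> kv2" "2 \<le> m" for u m
    using tr_eq_divg_tfser_coeff[OF sder2[OF that(1)] _ that(2), of "F u"] f_def that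
    by (simp add: field_simps)
  show ?thesis
  proof (intro conjI allI ballI impI)
    fix u :: "'k sd" and m :: nat assume u: "u \<in> kv2" and "even m"
    then consider "m = 0" | "2 \<le> m" "odd (m - 1)" by fastforce
    then show "F u m = 0" using f_def u F[OF u] sder2_snd_odd[OF sder2[OF u]] by cases auto
  next
    fix m :: nat and u v :: "'k sd" assume m: "odd m \<and> 3 \<le> m" and u: "u \<in> kv2" and v: "v \<in> kv2"
    show "F (padd u v) m = F u m + F v m"
      using F[OF kv2_padd[OF u v]] F[OF u] F[OF v] m by (simp add: padd_def sadd_def diff_divide_distrib)
  next
    fix m :: nat and u :: "'k sd" and c assume m: "odd m \<and> 3 \<le> m" and u: "u \<in> kv2"
    show "F (psc c u) m = c * F u m" using F[OF kv2_psc[OF u]] F[OF u] m by (simp add: psc_def ssc_def)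
  next
    fix m :: nat and u v w :: "'k sd"
    assume "odd m \<and> 3 \<le> m" and "u \<in> kv2" "v \<in> kv2" "w \<in> kv2" "is_bracket w u v"
    moreover from this have "2 \<le> m - 1" by linarith
    ultimately show "F w m = 0" using sder2_bracket_snd_X_Y[OF sder2 sder2 sder2] by (simp add: F)
  qed
qed

end
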